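(* If $G$ is a finite connected graph, then $\mathrm{gp_e}(G) \le 2\cdot \mathrm{ip_e}(G)$.
   Context: A geodesic (isometric path) in a graph is a shortest path between its endpoints. A set $S$ of edges of a graph $G$ is an edge general position set if no geodesic of $G$ contains three edges of $S$; $\mathrm{gp_e}(G)$ is the maximum cardinality of an edge general position set of $G$. An isometric path edge cover of $G$ is a collection of isometric paths of $G$ such that every edge of $G$ lies on at least one path of the collection; $\mathrm{ip_e}(G)$ is the minimum cardinality of an isometric path edge cover of $G$. *)

theory Defs
  imports Main
begin

definition fin_graph :: "'a set \<Rightarrow> ('a \<Rightarrow> 'a \<Rightarrow> bool) \<Rightarrow> bool" where
  "fin_graph V E \<longleftrightarrow> finite V \<and> (\<forall>u v. E u v \<longrightarrow> u \<in> V \<and> v \<in> V)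
     \<and> (\<forall>u v. E u v \<longrightarrow> E v u) \<and> (\<forall>u. \<not> E u u)"

definition gedges :: "'a set \<Rightarrow> ('a \<Rightarrow> 'a \<Rightarrow> bool) \<Rightarrow> 'a set set" where
  "gedges V E = {{u, v} | u v. u \<in> V \<and> v \<in> V \<and> E u v}"

definition walk :: "'a set \<Rightarrow> ('a \<Rightarrow> 'a \<Rightarrow> bool) \<Rightarrow> 'a list \<Rightarrow> bool" where
  "walk V E p \<longleftrightarrow> p \<noteq> [] \<and> set p \<subseteq> V \<and> (\<forall>i. Suc i < length p \<longrightarrow> E (p ! i) (p ! Suc i))"

definition connected_graph :: "'a set \<Rightarrow> ('a \<Rightarrow> 'a \<Rightarrow> bool) \<Rightarrow> bool" where
  "connected_graph V E \<longleftrightarrow> (\<forall>u\<in>V. \<forall>v\<in>V. \<exists>p. walk V E p \<and> hd p = u \<and> last p = v)"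

definition gdist :: "'a set \<Rightarrow> ('a \<Rightarrow> 'a \<Rightarrow> bool) \<Rightarrow> 'a \<Rightarrow> 'a \<Rightarrow> nat" where
  "gdist V E u v = (LEAST n. \<exists>p. walk V E p \<and> hd p = u \<and> last p = v \<and> length p = Suc n)"

definition path_edges :: "'a list \<Rightarrow> 'a set set" where
  "path_edges p = {{p ! i, p ! Suc i} | i. Suc i < length p}"

definition geodesic :: "'a set \<Rightarrow> ('a \<Rightarrow> 'a \<Rightarrow> bool) \<Rightarrow> 'a list \<Rightarrow> bool" where
  "geodesic V E p \<longleftrightarrow> walk V E p \<and> length p - 1 = gdist V E (hd p) (last p)"

definition edge_gp_set :: "'a set \<Rightarrow> ('a \<Rightarrow> 'a \<Rightarrow> bool) \<Rightarrow> 'a set set \<Rightarrow> bool" where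
  "edge_gp_set V E S \<longleftrightarrow> S \<subseteq> gedges V E \<and>
     (\<forall>p. geodesic V E p \<longrightarrow> \<not> (\<exists>T \<subseteq> S \<inter> path_edges p. card T = 3))"

definition gp_e :: "'a set \<Rightarrow> ('a \<Rightarrow> 'a \<Rightarrow> bool) \<Rightarrow> nat" where
  "gp_e V E = Max {card S | S. edge_gp_set V E S}"

definition ip_edge_cover :: "'a set \<Rightarrow> ('a \<Rightarrow> 'a \<Rightarrow> bool) \<Rightarrow> 'a list set \<Rightarrow> bool" where
  "ip_edge_cover V E C \<longleftrightarrow> finite C \<and> (\<forall>p\<in>C. geodesic V E p) \<and>
     gedges V E \<subseteq> (\<Union>p\<in>C. path_edges p)"

definition ip_e :: "'a set \<Rightarrow> ('a \<Rightarrow> 'a \<Rightarrow> bool) \<Rightarrow> nat" where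
  "ip_e V E = Min {card C | C. ip_edge_cover V E C}"

end

theory Submission
  imports Defs
begin

text \<open>
  Every edge of an edge general position set \<open>S\<close> lies on some path of an isometric path
  edge cover \<open>C\<close>, and a geodesic of \<open>C\<close> contains at most two edges of \<open>S\<close>; hence
  \<open>|S| \<le> 2|C|\<close>. The extrema defining \<open>gp\<^sub>e\<close> and \<open>ip\<^sub>e\<close> are attained because geodesics
  repeat no vertex, so a finite graph has only finitely many of them, and the single edges
  form an isometric path edge cover.
\<close>

lemma walk_iff_successively: "walk V E p \<longleftrightarrow> p \<noteq> [] \<and> set p \<subseteq> V \<and> successively E p"
  unfolding walk_def successively_conv_nth by simp

lemma gdist_le_length:
  assumes "walk V E p"
  shows "gdist V E (hd p) (last p) \<le> length p - 1"
  unfolding gdist_def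
  by (rule Least_le) (use assms in \<open>auto simp: walk_def\<close>)

lemma geodesic_distinct:
  assumes "geodesic V E p"
  shows "distinct p"
proof (rule ccontr)
  assume "\<not> distinct p"
  then obtain xs y ys zs where p: "p = xs @ [y] @ ys @ [y] @ zs"
    using not_distinct_decomp by blast
  have walk: "walk V E p" and geo: "length p - 1 = gdist V E (hd p) (last p)"
    using assms by (simp_all add: geodesic_def)
  define q where "q = xs @ [y] @ zs"
  have "successively E q"
    using walk unfolding walk_iff_successively p q_def
    by (auto simp: successively_append_iff successively_Cons)
  then have "walk V E q"
    using walk unfolding walk_iff_successively p q_def by auto
  moreover have "hd q = hd p" "last q = last p"
    unfolding p q_def by (cases xs; cases zs; simp)+
  ultimately have "gdist V E (hd p) (last p) \<le> length q - 1"
    using gdist_le_length by metis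
  moreover have "length q < length p" "length q \<ge> 1"
    unfolding p q_def by simp_all
  ultimately show False
    using geo by linarith
qed

lemma finite_geodesics:
  assumes "finite V"
  shows "finite {p. geodesic V E p}"
proof (rule finite_subset)
  show "{p. geodesic V E p} \<subseteq> {xs. set xs \<subseteq> V \<and> length xs \<le> card V}"
  proof safe
    fix p assume geo: "geodesic V E p"
    then show sub: "x \<in> V" if "x \<in> set p" for x
      using that by (auto simp: geodesic_def walk_def)
    have "length p = card (set p)"
      using geodesic_distinct[OF geo] by (simp add: distinct_card)
    also have "\<dots> \<le> card V"
      using sub assms by (intro card_mono) auto
    finally show "length p \<le> card V" .
  qed
  show "finite {xs. set xs \<subseteq> V \<and> length xs \<le> card V}"
    using assms by (rule finite_lists_length_le)
qed

lemma geodesic_edge: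
  assumes "fin_graph V E" and "E u v"
  shows "geodesic V E [u, v]"
proof -
  have walk: "walk V E [u, v]"
    using assms by (simp add: walk_iff_successively fin_graph_def)
  have "\<exists>q. walk V E q \<and> hd q = u \<and> last q = v \<and> length q = Suc (gdist V E u v)"
    unfolding gdist_def by (rule LeastI[of _ 1]) (use walk in auto)
  then obtain q where q: "walk V E q" "hd q = u" "last q = v" "length q = Suc (gdist V E u v)"
    by blast
  have "gdist V E u v \<noteq> 0"
  proof
    assume "gdist V E u v = 0"
    then have "q = [u]" and "u = v"
      using q by (cases q; simp)+
    then show False
      using assms by (simp add: fin_graph_def)
  qed
  moreover have "gdist V E u v \<le> 1"
    using gdist_le_length[OF walk] by simp
  ultimately show ?thesis
    using walk by (simp add: geodesic_def)
qed

lemma ip_edge_cover_single_edges: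
  assumes "fin_graph V E"
  shows "ip_edge_cover V E ((\<lambda>(u, v). [u, v]) ` {(u, v). E u v})"
  unfolding ip_edge_cover_def
proof (intro conjI)
  have "{(u, v). E u v} \<subseteq> V \<times> V" and "finite V"
    using assms by (auto simp: fin_graph_def)
  then show "finite ((\<lambda>(u, v). [u, v]) ` {(u, v). E u v})"
    by (meson finite_SigmaI finite_imageI finite_subset)
  show "\<forall>p\<in>(\<lambda>(u, v). [u, v]) ` {(u, v). E u v}. geodesic V E p"
    using geodesic_edge[OF assms] by auto
  show "gedges V E \<subseteq> (\<Union>p\<in>(\<lambda>(u, v). [u, v]) ` {(u, v). E u v}. path_edges p)"
  proof
    fix e assume "e \<in> gedges V E"
    then obtain u v where e: "e = {u, v}" "E u v"
      by (auto simp: gedges_def)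
    have "e \<in> path_edges [u, v]"
      unfolding path_edges_def e by (rule CollectI, rule exI[of _ 0]) simp
    then show "e \<in> (\<Union>p\<in>(\<lambda>(u, v). [u, v]) ` {(u, v). E u v}. path_edges p)"
      using e by blast
  qed
qed

lemma ip_e_attained:
  assumes "fin_graph V E"
  obtains C where "ip_edge_cover V E C" and "ip_e V E = card C"
proof -
  let ?I = "{card C | C. ip_edge_cover V E C}"
  let ?G = "{p. geodesic V E p}"
  have "finite ?G"
    using assms by (intro finite_geodesics) (simp add: fin_graph_def)
  then have "?I \<subseteq> {..card ?G}"
    by (auto simp: ip_edge_cover_def intro!: card_mono)
  then have "finite ?I"
    by (rule finite_subset) simp
  moreover have "?I \<noteq> {}"
    using ip_edge_cover_single_edges[OF assms] by blast
  ultimately have "ip_e V E \<in> ?I"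
    unfolding ip_e_def by (rule Min_in)
  then show ?thesis
    using that by auto
qed

lemma card_inter_path_edges_le_2:
  assumes "edge_gp_set V E S" and "geodesic V E p"
  shows "card (S \<inter> path_edges p) \<le> 2"
proof (rule ccontr)
  assume "\<not> ?thesis"
  then obtain T where "T \<subseteq> S \<inter> path_edges p" "card T = 3"
    by (metis obtain_subset_with_card_n not_le Suc_leI numeral_2_eq_2 numeral_3_eq_3)
  then show False
    using assms by (auto simp: edge_gp_set_def)
qed

lemma card_edge_gp_set_le:
  assumes "fin_graph V E" and "edge_gp_set V E S" and "ip_edge_cover V E C"
  shows "card S \<le> 2 * card C"
proof -
  have S_edges: "S \<subseteq> gedges V E"
    using assms(2) by (simp add: edge_gp_set_def)
  have "gedges V E \<subseteq> Pow V" and "finite V"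
    using assms(1) by (auto simp: gedges_def fin_graph_def)
  then have "finite S"
    using S_edges by (meson finite_Pow_iff finite_subset)
  have "finite C" and cover: "gedges V E \<subseteq> (\<Union>p\<in>C. path_edges p)"
    using assms(3) by (simp_all add: ip_edge_cover_def)
  have "card S \<le> card (\<Union>p\<in>C. S \<inter> path_edges p)"
    using S_edges cover \<open>finite S\<close> by (intro card_mono) auto
  also have "\<dots> \<le> (\<Sum>p\<in>C. card (S \<inter> path_edges p))"
    using \<open>finite C\<close> by (rule card_UN_le)
  also have "\<dots> \<le> (\<Sum>p\<in>C. 2)"
    using assms(2,3) by (intro sum_mono card_inter_path_edges_le_2) (auto simp: ip_edge_cover_def)
  finally show ?thesis
    by simp
qed

lemma gp_e_le:
  assumes "\<And>S. edge_gp_set V E S \<Longrightarrow> card S \<le> b"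
  shows "gp_e V E \<le> b"
proof -
  let ?S = "{card S | S. edge_gp_set V E S}"
  have "?S \<subseteq> {..b}"
    using assms by auto
  then have "finite ?S"
    by (rule finite_subset) simp
  moreover have "edge_gp_set V E {}"
    by (simp add: edge_gp_set_def)
  then have "?S \<noteq> {}"
    by blast
  ultimately show ?thesis
    using assms unfolding gp_e_def by (auto simp: Max_le_iff)
qed

theorem lemma2p2:
  fixes V :: "'a set" and E :: "'a \<Rightarrow> 'a \<Rightarrow> bool"
  assumes "fin_graph V E" and "connected_graph V E"
  shows "gp_e V E \<le> 2 * ip_e V E"
proof -
  obtain C where "ip_edge_cover V E C" and "ip_e V E = card C"
    using ip_e_attained[OF assms(1)] .
  then show ?thesis
    using card_edge_gp_set_le[OF assms(1)] by (auto intro: gp_e_le)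
qed

end
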